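(* Let $A$ be an $m \times m$ normal centrosymmetric nonnegative matrix with eigenvalues $\alpha_1, \ldots, \alpha_m$, where $\alpha_1$ is the Perron root of $A$ and there is a unit nonnegative eigenvector $u_1$ of $A$ for $\alpha_1$ with $Ju_1 = u_1$; let $B$ be an $n \times n$ normal centrosymmetric nonnegative matrix with eigenvalues $\beta_1, \ldots, \beta_n$, where $\beta_1$ is the Perron root of $B$ and there is a unit nonnegative eigenvector $v_1$ of $B$ for $\beta_1$ with $Jv_1 = v_1$. Assume $\alpha_1 \geq \beta_1$. If $a, b$ are real numbers with $\alpha_1 - \beta_1 \geq a \geq b$ and $a + b \leq 0$, then there is a normal centrosymmetric nonnegative matrix with eigenvalues $\alpha_1 - (a+b), \beta_1 + a, \beta_1 + b, \alpha_2, \ldots, \alpha_m, \beta_2, \ldots, \beta_n, \beta_2, \ldots, \beta_n$.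
   Context: $J$ denotes the reverse identity matrix (ones on the anti-diagonal, zeros elsewhere) of the appropriate size. A square matrix $Q$ is centrosymmetric if $JQJ = Q$, nonnegative if all entries are nonnegative, and normal if $QQ^* = Q^*Q$. The Perron root of a nonnegative matrix is its spectral radius, which is an eigenvalue. *)

theory Defs
  imports "Jordan_Normal_Form.Spectral_Radius"
begin

definition revid :: "nat \<Rightarrow> real mat" where
  "revid k = mat k k (\<lambda>(i,j). if i + j + 1 = k then 1 else 0)"

definition centrosymmetric :: "real mat \<Rightarrow> bool" where
  "centrosymmetric Q \<longleftrightarrow> revid (dim_row Q) * Q * revid (dim_row Q) = Q"

definition nonneg_mat :: "real mat \<Rightarrow> bool" where
  "nonneg_mat Q \<longleftrightarrow> (\<forall>i<dim_row Q. \<forall>j<dim_col Q. Q $$ (i,j) \<ge> 0)"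

text \<open>For real matrices the conjugate transpose is the transpose.\<close>
definition normal_mat :: "real mat \<Rightarrow> bool" where
  "normal_mat Q \<longleftrightarrow> Q * transpose_mat Q = transpose_mat Q * Q"

definition eigenvalues_list :: "real mat \<Rightarrow> complex list \<Rightarrow> bool" where
  "eigenvalues_list Q es \<longleftrightarrow>
     char_poly (map_mat complex_of_real Q) = (\<Prod>e\<leftarrow>es. [:- e, 1:])"

definition perron_root :: "real mat \<Rightarrow> real" where
  "perron_root Q = spectral_radius (map_mat complex_of_real Q)"

definition nonneg_vec :: "real vec \<Rightarrow> bool" where
  "nonneg_vec v \<longleftrightarrow> (\<forall>i<dim_vec v. v $ i \<ge> 0)"

definition is_unit_vector :: "real vec \<Rightarrow> bool" where
  "is_unit_vector v \<longleftrightarrow> v \<bullet> v = 1"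

end

theory Submission
  imports Defs
begin

text \<open>
  Let \<open>D = diag(B, A, B)\<close>. The vectors \<open>w\<^sub>0 = (0, u\<^sub>1, 0)\<close>, \<open>w\<^sub>1 = (v\<^sub>1, 0, v\<^sub>1)\<close> and
  \<open>w\<^sub>2 = (v\<^sub>1, 0, -v\<^sub>1)\<close> are eigenvectors of \<open>D\<close> for \<open>\<alpha>\<^sub>1, \<beta>\<^sub>1, \<beta>\<^sub>1\<close> and, since a real
  normal matrix shares its eigenvectors with its transpose, also of \<open>D\<^sup>T\<close>; the exchange
  matrix \<open>J\<close> fixes \<open>w\<^sub>0, w\<^sub>1\<close> and negates \<open>w\<^sub>2\<close>, and \<open>W\<^sup>T W = diag(1, 2, 2)\<close> for
  \<open>W = [w\<^sub>0 w\<^sub>1 w\<^sub>2]\<close>. For a symmetric \<open>3 \<times> 3\<close> matrix \<open>K\<close> the update \<open>C = D + W K W\<^sup>T\<close> is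
  therefore normal, it is centrosymmetric when \<open>K\<close> commutes with \<open>diag(1, 1, -1)\<close>, and by
  the matrix determinant lemma its spectrum is that of \<open>D\<close> with \<open>\<alpha>\<^sub>1, \<beta>\<^sub>1, \<beta>\<^sub>1\<close> replaced by
  the eigenvalues of \<open>diag(\<alpha>\<^sub>1, \<beta>\<^sub>1, \<beta>\<^sub>1) + K W\<^sup>T W\<close>. The choice
  \<open>K = [[0, k, 0], [k, c, 0], [0, 0, -c]]\<close> with \<open>c = -b/2\<close> and \<open>2k\<^sup>2 = -(a + b)(\<alpha>\<^sub>1 - \<beta>\<^sub>1 - a)\<close>
  produces the eigenvalues \<open>\<alpha>\<^sub>1 - (a + b), \<beta>\<^sub>1 + a, \<beta>\<^sub>1 + b\<close>, and \<open>C\<close> stays nonnegative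
  because \<open>k, c \<ge> 0\<close> and \<open>|w\<^sub>2| = w\<^sub>1\<close> entrywise.
\<close>

section \<open>Determinants and characteristic polynomials of low-rank updates\<close>

lemma assoc_mult_mat_dims:
  fixes A :: "'a :: semiring_0 mat"
  assumes "dim_col A = dim_row B" and "dim_col B = dim_row C"
  shows "A * B * C = A * (B * C)"
  using assms by (intro assoc_mult_mat[of A "dim_row A" "dim_col A" B "dim_col B" C "dim_col C"]) auto

lemma det_one_minus_mult_commute:
  fixes U V :: "'a :: idom mat"
  assumes U: "U \<in> carrier_mat n r" and V: "V \<in> carrier_mat r n"
  shows "det (1\<^sub>m n - U * V) = det (1\<^sub>m r - V * U)"
proof -
  define M where "M = four_block_mat (1\<^sub>m n) U V (1\<^sub>m r)"
  define L1 where "L1 = four_block_mat (1\<^sub>m n) (0\<^sub>m n r) (- V) (1\<^sub>m r)"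
  define L2 where "L2 = four_block_mat (1\<^sub>m n) (- U) (0\<^sub>m r n) (1\<^sub>m r)"
  have M: "M \<in> carrier_mat (n + r) (n + r)" and L1: "L1 \<in> carrier_mat (n + r) (n + r)"
    and L2: "L2 \<in> carrier_mat (n + r) (n + r)"
    unfolding M_def L1_def L2_def using U V by auto
  have minus: "- (V * U) + 1\<^sub>m r = 1\<^sub>m r - V * U" "1\<^sub>m n + - (U * V) = 1\<^sub>m n - U * V"
    "U + - U = 0\<^sub>m n r"
    using U V by (auto intro!: eq_matI)
  have L1M: "L1 * M = four_block_mat (1\<^sub>m n) U (0\<^sub>m r n) (1\<^sub>m r - V * U)"
    unfolding L1_def M_def using U V by (simp add: mult_four_block_mat[of _ n n _ r _ r _ _ n _ r] minus)
  have L2M: "L2 * M = four_block_mat (1\<^sub>m n - U * V) (0\<^sub>m n r) V (1\<^sub>m r)"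
    unfolding L2_def M_def using U V by (simp add: mult_four_block_mat[of _ n n _ r _ r _ _ n _ r] minus)
  have "det L1 * det M = det (1\<^sub>m r - V * U)"
    unfolding det_mult[OF L1 M, symmetric] L1M
    by (subst det_four_block_mat_lower_left_zero[of _ n _ r]) (use U V in auto)
  moreover have "det L2 * det M = det (1\<^sub>m n - U * V)"
    unfolding det_mult[OF L2 M, symmetric] L2M
    by (subst det_four_block_mat_upper_right_zero[of _ n _ r]) (use U V in auto)
  moreover have "det L1 = 1" "det L2 = 1"
    unfolding L1_def L2_def using U V
    by (simp_all add: det_four_block_mat_lower_left_zero[of _ n _ r]
        det_four_block_mat_upper_right_zero[of _ n _ r])
  ultimately show ?thesis by simp
qed

lemma det_rank_update:
  fixes M L W K V :: "'a :: field mat"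
  assumes M: "M \<in> carrier_mat n n" and L: "L \<in> carrier_mat r r"
    and W: "W \<in> carrier_mat n r" and K: "K \<in> carrier_mat r r" and V: "V \<in> carrier_mat r n"
    and MW: "M * W = W * L" and L_nonsing: "det L \<noteq> 0"
  shows "det (M - W * K * V) * det L = det M * det (L - K * V * W)"
proof -
  define L' where "L' = (1 / det L) \<cdot>\<^sub>m adj_mat L"
  have L': "L' \<in> carrier_mat r r" unfolding L'_def using adj_mat(1)[OF L] by simp
  have "L * L' = 1\<^sub>m r"
    unfolding L'_def using adj_mat[OF L] L_nonsing
    by (auto simp: mult_smult_distrib[OF L] intro!: eq_matI)
  define Z where "Z = L' * (K * V)"
  have Z: "Z \<in> carrier_mat r n" unfolding Z_def using L' K V by auto
  have LZ: "L * Z = K * V"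
    unfolding Z_def using L L' K V \<open>L * L' = 1\<^sub>m r\<close>
    by (simp add: assoc_mult_mat[of L r r L' r _ n, symmetric])
  have IWZ: "1\<^sub>m n - W * Z \<in> carrier_mat n n" and IZW: "1\<^sub>m r - Z * W \<in> carrier_mat r r"
    using W Z by auto
  have "M - W * K * V = M * (1\<^sub>m n - W * Z)"
  proof -
    have "M * (W * Z) = W * (L * Z)"
      using M W L Z by (simp add: assoc_mult_mat[of M n n W r Z n, symmetric] MW)
    then show ?thesis
      using M W K V Z
      by (simp add: mult_minus_distrib_mat[OF M one_carrier_mat mult_carrier_mat[OF W Z]] LZ
          assoc_mult_mat[of W n r K r V n])
  qed
  then have "det (M - W * K * V) = det M * det (1\<^sub>m r - Z * W)"
    by (simp add: det_mult[OF M IWZ] det_one_minus_mult_commute[OF W Z])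
  moreover have "L - K * V * W = L * (1\<^sub>m r - Z * W)"
    using L Z W K V
    by (simp add: mult_minus_distrib_mat[OF L one_carrier_mat mult_carrier_mat[OF Z W]] LZ
        assoc_mult_mat[of L r r Z n W r, symmetric])
  then have "det (L - K * V * W) = det L * det (1\<^sub>m r - Z * W)"
    by (simp add: det_mult[OF L IZW])
  ultimately show ?thesis by simp
qed

lemma poly_char_poly_eq_det:
  fixes A :: "'a :: field mat"
  assumes A: "A \<in> carrier_mat n n"
  shows "poly (char_poly A) x = det (x \<cdot>\<^sub>m 1\<^sub>m n - A)"
proof -
  have "- char_matrix A x = x \<cdot>\<^sub>m 1\<^sub>m n - A"
    using A by (auto simp: char_matrix_def intro!: eq_matI)
  then show ?thesis using char_poly_matrix[OF A] by simp
qed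

lemma poly_eqI_cofinite:
  fixes p q :: "'a :: {idom, ring_char_0} poly"
  assumes "finite S" and "\<And>x. x \<notin> S \<Longrightarrow> poly p x = poly q x"
  shows "p = q"
proof (rule ccontr)
  assume "p \<noteq> q"
  then have "finite {x. poly (p - q) x = 0}" by (intro poly_roots_finite) simp
  moreover have "UNIV \<subseteq> S \<union> {x. poly (p - q) x = 0}" using assms(2) by auto
  ultimately show False using \<open>finite S\<close> infinite_UNIV_char_0 finite_subset by blast
qed

lemma char_poly_rank_update:
  fixes X W K V \<Lambda> :: "'a :: field_char_0 mat"
  assumes X: "X \<in> carrier_mat n n" and \<Lambda>: "\<Lambda> \<in> carrier_mat r r"
    and W: "W \<in> carrier_mat n r" and K: "K \<in> carrier_mat r r" and V: "V \<in> carrier_mat r n"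
    and XW: "X * W = W * \<Lambda>"
  shows "char_poly (X + W * K * V) * char_poly \<Lambda> = char_poly X * char_poly (\<Lambda> + K * V * W)"
proof (rule poly_eqI_cofinite)
  show "finite {x. poly (char_poly \<Lambda>) x = 0}"
    using degree_monic_char_poly[OF \<Lambda>] by (intro poly_roots_finite) auto
next
  fix x
  assume "x \<notin> {x. poly (char_poly \<Lambda>) x = 0}"
  then have nonsing: "det (x \<cdot>\<^sub>m 1\<^sub>m r - \<Lambda>) \<noteq> 0"
    using poly_char_poly_eq_det[OF \<Lambda>] by simp
  have shift: "(x \<cdot>\<^sub>m 1\<^sub>m n - X) * W = W * (x \<cdot>\<^sub>m 1\<^sub>m r - \<Lambda>)"
  proof -
    have "(x \<cdot>\<^sub>m 1\<^sub>m n - X) * W = x \<cdot>\<^sub>m W - W * \<Lambda>"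
      using X W by (simp add: minus_mult_distrib_mat[of _ n n _ W r] XW mult_smult_assoc_mat[of _ n n W r])
    also have "\<dots> = W * (x \<cdot>\<^sub>m 1\<^sub>m r - \<Lambda>)"
      using W \<Lambda> by (simp add: mult_minus_distrib_mat[of W n r _ r] mult_smult_distrib[of W n r _ r])
    finally show ?thesis .
  qed
  have "x \<cdot>\<^sub>m 1\<^sub>m n - (X + W * K * V) = (x \<cdot>\<^sub>m 1\<^sub>m n - X) - W * K * V"
    and "x \<cdot>\<^sub>m 1\<^sub>m r - (\<Lambda> + K * V * W) = (x \<cdot>\<^sub>m 1\<^sub>m r - \<Lambda>) - K * V * W"
    using X \<Lambda> W K V by (auto intro!: eq_matI)
  moreover have "X + W * K * V \<in> carrier_mat n n" and "\<Lambda> + K * V * W \<in> carrier_mat r r"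
    and "x \<cdot>\<^sub>m 1\<^sub>m n - X \<in> carrier_mat n n"
    and "x \<cdot>\<^sub>m 1\<^sub>m r - \<Lambda> \<in> carrier_mat r r"
    using X \<Lambda> W K V by auto
  ultimately show "poly (char_poly (X + W * K * V) * char_poly \<Lambda>) x =
      poly (char_poly X * char_poly (\<Lambda> + K * V * W)) x"
    using det_rank_update[OF _ _ W K V shift nonsing] X \<Lambda>
    by (simp add: poly_char_poly_eq_det)
qed

lemma det_3:
  fixes A :: "'a :: comm_ring_1 mat"
  assumes A: "A \<in> carrier_mat 3 3"
  shows "det A = A $$ (0,0) * (A $$ (1,1) * A $$ (2,2) - A $$ (1,2) * A $$ (2,1))
     - A $$ (0,1) * (A $$ (1,0) * A $$ (2,2) - A $$ (1,2) * A $$ (2,0))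
     + A $$ (0,2) * (A $$ (1,0) * A $$ (2,1) - A $$ (1,1) * A $$ (2,0))"
  using A
  apply (subst laplace_expansion_row[OF A, of 0])
  apply (auto simp: cofactor_def eval_nat_numeral)
  apply (subst (1 2 3) laplace_expansion_row[of _ 2 0])
  apply (auto simp: mat_delete_def algebra_simps cofactor_def eval_nat_numeral det_single)
  done

lemma char_poly_mat_diag_3:
  fixes x y z :: "'a :: comm_ring_1"
  shows "char_poly (mat_diag 3 (\<lambda>j. [x, y, z] ! j)) = [:- x, 1:] * [:- y, 1:] * [:- z, 1:]"
proof -
  have "upper_triangular (mat_diag 3 (\<lambda>j. [x, y, z] ! j))"
    by (auto simp: upper_triangular_def mat_diag_def)
  then show ?thesis
    by (simp add: char_poly_upper_triangular[of _ 3] diag_mat_def mat_diag_def upt_conv_Cons algebra_simps)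
qed

lemma char_poly_block_2_1:
  fixes p q r s t x y :: "'a :: field_char_0"
  assumes "x + y = p + s" and "x * y = p * s - q * r"
  shows "char_poly (mat_of_rows_list 3 [[p, q, 0], [r, s, 0], [0, 0, t]])
    = [:- x, 1:] * [:- y, 1:] * [:- t, 1:]"
proof -
  define T where "T = mat_of_rows_list 3 [[p, q, 0], [r, s, 0], [0, 0, t]]"
  have T: "T \<in> carrier_mat 3 3" unfolding T_def by (simp add: mat_of_rows_list_def numeral_3_eq_3)
  have "poly (char_poly T) z = poly ([:- x, 1:] * [:- y, 1:] * [:- t, 1:]) z" for z
  proof -
    have zT: "z \<cdot>\<^sub>m 1\<^sub>m 3 - T \<in> carrier_mat 3 3" using T by auto
    have "poly (char_poly T) z = (z * z - (p + s) * z + (p * s - q * r)) * (z - t)"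
      unfolding poly_char_poly_eq_det[OF T] det_3[OF zT] using T
      by (simp add: T_def mat_of_rows_list_def algebra_simps)
    also have "\<dots> = (z - x) * (z - y) * (z - t)"
      unfolding assms[symmetric] by (simp add: algebra_simps)
    finally show ?thesis by (simp add: algebra_simps)
  qed
  then show ?thesis unfolding T_def[symmetric] by (intro poly_eq_poly_eq_iff[THEN iffD1] ext)
qed

lemma eigenvalues_list_cancel:
  fixes A B C :: "real mat"
  assumes C: "C \<in> carrier_mat k k" and A: "A \<in> carrier_mat m m" and B: "B \<in> carrier_mat n n"
    and A_eig: "eigenvalues_list A (complex_of_real \<alpha> # \<alpha>s)"
    and B_eig: "eigenvalues_list B (complex_of_real \<beta> # \<beta>s)"
    and char_poly_eq: "char_poly C * ([:- \<alpha>, 1:] * [:- \<beta>, 1:] * [:- \<beta>, 1:])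
      = char_poly A * char_poly B * char_poly B * ([:- x, 1:] * [:- y, 1:] * [:- z, 1:])"
  shows "eigenvalues_list C
    ([complex_of_real x, complex_of_real y, complex_of_real z] @ \<alpha>s @ \<beta>s @ \<beta>s)"
proof -
  interpret h: map_poly_idom_hom complex_of_real ..
  let ?h = "map_poly complex_of_real"
  let ?lin = "\<lambda>e. [:- e, 1:] :: complex poly"
  have "?h (char_poly A) = (\<Prod>e\<leftarrow>complex_of_real \<alpha> # \<alpha>s. ?lin e)"
    using A_eig of_real_hom.char_poly_hom[OF A] unfolding eigenvalues_list_def by metis
  then have hA: "?h (char_poly A) = ?lin \<alpha> * (\<Prod>e\<leftarrow>\<alpha>s. ?lin e)" by simp
  have "?h (char_poly B) = (\<Prod>e\<leftarrow>complex_of_real \<beta> # \<beta>s. ?lin e)"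
    using B_eig of_real_hom.char_poly_hom[OF B] unfolding eigenvalues_list_def by metis
  then have hB: "?h (char_poly B) = ?lin \<beta> * (\<Prod>e\<leftarrow>\<beta>s. ?lin e)" by simp
  have lin: "?h [:- r, 1:] = ?lin (complex_of_real r)" for r by simp
  define L where "L = ?lin \<alpha> * ?lin \<beta> * ?lin \<beta>"
  define R where "R = ?lin x * ?lin y * ?lin z
    * ((\<Prod>e\<leftarrow>\<alpha>s. ?lin e) * (\<Prod>e\<leftarrow>\<beta>s. ?lin e) * (\<Prod>e\<leftarrow>\<beta>s. ?lin e))"
  have "?h (char_poly C) * L = L * R"
    using arg_cong[OF char_poly_eq, of ?h] unfolding L_def R_def
    by (simp only: h.hom_mult lin hA hB) (simp only: ac_simps)
  moreover have "L \<noteq> 0" unfolding L_def by simp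
  ultimately have "?h (char_poly C) = R" by (simp add: mult.commute[of "?h (char_poly C)"])
  then show ?thesis
    unfolding eigenvalues_list_def of_real_hom.char_poly_hom[OF C]
    by (simp only: R_def map_append prod_list.append list.map prod_list.Cons prod_list.Nil
        mult_1_right mult.assoc)
qed

section \<open>Normal matrices\<close>

lemma real_self_scalar_prod_eq_0_iff:
  fixes v :: "real vec"
  assumes "v \<in> carrier_vec n"
  shows "v \<bullet> v = 0 \<longleftrightarrow> v = 0\<^sub>v n"
proof -
  have "conjugate v = v" by (auto simp: conjugate_real_def intro!: eq_vecI)
  then show ?thesis using conjugate_square_eq_0_vec[OF assms] by (simp add: scalar_prod_def)
qed

lemma normal_mat_eigenvector_transpose:
  fixes Q :: "real mat"
  assumes Q: "Q \<in> carrier_mat n n" and normal: "normal_mat Q"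
    and x: "x \<in> carrier_vec n" and eigen: "Q *\<^sub>v x = e \<cdot>\<^sub>v x"
  shows "transpose_mat Q *\<^sub>v x = e \<cdot>\<^sub>v x"
proof -
  define z where "z = transpose_mat Q *\<^sub>v x"
  have z: "z \<in> carrier_vec n" unfolding z_def using Q x by auto
  have "z \<bullet> z = x \<bullet> ((Q * transpose_mat Q) *\<^sub>v x)"
    unfolding z_def using Q x by (simp add: transpose_vec_mult_scalar[of Q n n] assoc_mult_mat_vec[of _ n n _ n])
  also have "\<dots> = (transpose_mat Q *\<^sub>v (Q *\<^sub>v x)) \<bullet> x"
    using normal Q x comm_scalar_prod[OF x, of "transpose_mat Q *\<^sub>v (Q *\<^sub>v x)"]
    unfolding normal_mat_def by (simp add: assoc_mult_mat_vec[of _ n n _ n])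
  also have "\<dots> = (Q *\<^sub>v x) \<bullet> (Q *\<^sub>v x)"
    using Q x by (simp add: transpose_vec_mult_scalar[of Q n n])
  finally have zz: "z \<bullet> z = e * e * (x \<bullet> x)"
    using x by (simp add: eigen)
  have xz: "x \<bullet> z = e * (x \<bullet> x)"
    unfolding z_def using Q x comm_scalar_prod[OF x, of "transpose_mat Q *\<^sub>v x"]
    by (simp add: transpose_vec_mult_scalar[of Q n n] eigen)
  have "(z - e \<cdot>\<^sub>v x) \<bullet> (z - e \<cdot>\<^sub>v x) = z \<bullet> z - 2 * e * (x \<bullet> z) + e * e * (x \<bullet> x)"
    using x z comm_scalar_prod[OF z x]
    by (simp add: minus_scalar_prod_distrib[of _ n] scalar_prod_minus_distrib[of _ n] algebra_simps)
  then have "(z - e \<cdot>\<^sub>v x) \<bullet> (z - e \<cdot>\<^sub>v x) = 0" by (simp add: zz xz)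
  then have diff: "z - e \<cdot>\<^sub>v x = 0\<^sub>v n"
    using real_self_scalar_prod_eq_0_iff[of "z - e \<cdot>\<^sub>v x" n] x z by simp
  have "z $ i = e * x $ i" if "i < n" for i
    using arg_cong[OF diff, of "\<lambda>w. w $ i"] that x z by simp
  then show ?thesis unfolding z_def[symmetric] using x z by (intro eq_vecI) auto
qed

lemma normal_mat_rank_update:
  fixes D W K :: "real mat"
  assumes D: "D \<in> carrier_mat n n" "normal_mat D" and W: "W \<in> carrier_mat n r"
    and K: "K \<in> carrier_mat r r" "transpose_mat K = K"
    and DW: "D * W = transpose_mat D * W"
  shows "normal_mat (D + W * K * transpose_mat W)"
proof -
  define P where "P = W * K * transpose_mat W"
  have P: "P \<in> carrier_mat n n" unfolding P_def using W K by auto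
  have DT: "transpose_mat D \<in> carrier_mat n n" using D by auto
  have "transpose_mat P = transpose_mat (transpose_mat W) * transpose_mat (W * K)"
    unfolding P_def using W K by (intro transpose_mult[of _ n r]) auto
  also have "\<dots> = P"
    unfolding P_def using W K by (simp add: transpose_mult[of W n r K r] assoc_mult_mat_dims)
  finally have PT: "transpose_mat P = P" .
  have "D * P = (D * W) * K * transpose_mat W"
    unfolding P_def using D W K(1) by (simp add: assoc_mult_mat_dims)
  also have "\<dots> = transpose_mat D * P"
    unfolding DW P_def using D W K(1) by (simp add: assoc_mult_mat_dims)
  finally have DP: "D * P = transpose_mat D * P" .
  have PD: "P * transpose_mat D = P * D"
  proof -
    have "P * transpose_mat D = transpose_mat (D * P)"
      using D P PT by (simp add: transpose_mult[of D n n P n])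
    also have "\<dots> = P * D"
      using DT P PT by (simp add: DP transpose_mult[of "transpose_mat D" n n P n])
    finally show ?thesis .
  qed
  have DTP: "transpose_mat D + P \<in> carrier_mat n n" and DP': "D + P \<in> carrier_mat n n"
    using DT D P by auto
  have "(D + P) * (transpose_mat D + P) = D * transpose_mat D + D * P + (P * transpose_mat D + P * P)"
    unfolding add_mult_distrib_mat[OF D(1) P DTP] mult_add_distrib_mat[OF D(1) DT P]
      mult_add_distrib_mat[OF P DT P] ..
  also have "\<dots> = transpose_mat D * D + transpose_mat D * P + (P * D + P * P)"
    using D(2) unfolding normal_mat_def DP PD by simp
  also have "\<dots> = (transpose_mat D + P) * (D + P)"
    unfolding add_mult_distrib_mat[OF DT P DP'] mult_add_distrib_mat[OF DT D(1) P]
      mult_add_distrib_mat[OF P D(1) P] ..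
  finally show ?thesis
    unfolding normal_mat_def P_def[symmetric] using D P PT by (simp add: transpose_add[of D n n P])
qed

section \<open>Block-diagonal matrices and eigenvector matrices\<close>

abbreviation block_diag :: "'a :: zero mat \<Rightarrow> 'a mat \<Rightarrow> 'a mat" where
  "block_diag A B \<equiv> four_block_mat A (0\<^sub>m (dim_row A) (dim_col B)) (0\<^sub>m (dim_row B) (dim_col A)) B"

lemma block_diag_carrier:
  "A \<in> carrier_mat p p \<Longrightarrow> B \<in> carrier_mat q q
    \<Longrightarrow> block_diag A B \<in> carrier_mat (p + q) (p + q)"
  by auto

lemma char_poly_block_diag:
  fixes A B :: "'a :: idom mat"
  assumes A: "A \<in> carrier_mat p p" and B: "B \<in> carrier_mat q q"
  shows "char_poly (block_diag A B) = char_poly A * char_poly B"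
proof -
  have "char_poly_matrix (block_diag A B)
      = four_block_mat (char_poly_matrix A) (0\<^sub>m p q) (0\<^sub>m q p) (char_poly_matrix B)"
    using A B by (auto simp: char_poly_matrix_def intro!: eq_matI)
  then show ?thesis
    unfolding char_poly_def using A B by (simp add: det_four_block_mat_lower_left_zero[of _ p _ q])
qed

lemma transpose_block_diag:
  assumes "A \<in> carrier_mat p p" and "B \<in> carrier_mat q q"
  shows "transpose_mat (block_diag A B) = block_diag (transpose_mat A) (transpose_mat B)"
  using assms by (subst transpose_four_block_mat[of A p p _ q _ q B]) auto

lemma normal_mat_block_diag:
  assumes A: "A \<in> carrier_mat p p" "normal_mat A" and B: "B \<in> carrier_mat q q" "normal_mat B"
  shows "normal_mat (block_diag A B)"
proof -
  have "transpose_mat A \<in> carrier_mat p p" and "transpose_mat B \<in> carrier_mat q q"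
    using A B by auto
  then show ?thesis
    using A B unfolding normal_mat_def transpose_block_diag[OF A(1) B(1)]
    by (subst (1 2) mult_four_block_mat[of _ p p _ q _ q _ _ p _ q]) auto
qed

lemma nonneg_mat_block_diag:
  assumes "nonneg_mat A" and "nonneg_mat B"
  shows "nonneg_mat (block_diag A B)"
  using assms unfolding nonneg_mat_def by auto

lemma block_diag_eigenvector:
  assumes A: "A \<in> carrier_mat p p" and B: "B \<in> carrier_mat q q"
    and x: "x \<in> carrier_vec p" and y: "y \<in> carrier_vec q"
    and "A *\<^sub>v x = e \<cdot>\<^sub>v x" and "B *\<^sub>v y = e \<cdot>\<^sub>v y"
  shows "block_diag A B *\<^sub>v (x @\<^sub>v y) = e \<cdot>\<^sub>v (x @\<^sub>v y)"
  using mult_mat_vec_split[OF A B x y] assms by (auto intro!: eq_vecI)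

lemma transpose_mat_diag: "transpose_mat (mat_diag n f) = mat_diag n f"
  by (auto simp: mat_diag_def intro!: eq_matI)

lemma mult_mat_of_cols_eigenvectors:
  fixes X :: "'a :: comm_ring_1 mat"
  assumes X: "X \<in> carrier_mat n n" and ws: "set ws \<subseteq> carrier_vec n" and len: "length es = length ws"
    and eigen: "\<And>j. j < length ws \<Longrightarrow> X *\<^sub>v ws ! j = es ! j \<cdot>\<^sub>v ws ! j"
  shows "X * mat_of_cols n ws = mat_of_cols n ws * mat_diag (length ws) (\<lambda>j. es ! j)"
proof (rule eq_matI)
  fix i j assume "i < dim_row (mat_of_cols n ws * mat_diag (length ws) (\<lambda>j. es ! j))"
    and "j < dim_col (mat_of_cols n ws * mat_diag (length ws) (\<lambda>j. es ! j))"
  then have i: "i < n" and j: "j < length ws" by (auto simp: mat_diag_def)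
  moreover have wj: "ws ! j \<in> carrier_vec n" using ws j by auto
  ultimately have "(X * mat_of_cols n ws) $$ (i, j) = (X *\<^sub>v ws ! j) $ i"
    using X by (simp add: col_mat_of_cols)
  then show "(X * mat_of_cols n ws) $$ (i, j)
      = (mat_of_cols n ws * mat_diag (length ws) (\<lambda>j. es ! j)) $$ (i, j)"
    using i j wj by (simp add: eigen mat_diag_mult_right[of _ n] mat_of_cols_def mult.commute)
qed (use X in \<open>auto simp: mat_diag_def\<close>)

section \<open>The exchange matrix\<close>

lemma revid_carrier[simp]: "revid k \<in> carrier_mat k k"
  unfolding revid_def by auto

lemma dim_revid[simp]: "dim_row (revid k) = k" "dim_col (revid k) = k"
  unfolding revid_def by auto

lemma transpose_revid: "transpose_mat (revid k) = revid k"
  unfolding revid_def by (auto intro!: eq_matI)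

lemma revid_index_set:
  "i < k \<Longrightarrow> {l. l < k \<and> Suc (i + l) = k} = {k - Suc i}"
  "i < k \<Longrightarrow> {l. l < k \<and> Suc (l + i) = k} = {k - Suc i}"
  by auto

lemma index_revid_mult_vec:
  assumes "x \<in> carrier_vec k" and "i < k"
  shows "(revid k *\<^sub>v x) $ i = x $ (k - 1 - i)"
  using assms
  by (simp add: revid_def scalar_prod_def atLeast0LessThan if_distrib[of "\<lambda>c. c * _"]
      sum.If_cases Int_def revid_index_set)

lemma index_revid_mult:
  assumes "Q \<in> carrier_mat k c" and "i < k" and "j < c"
  shows "(revid k * Q) $$ (i, j) = Q $$ (k - 1 - i, j)"
  using assms
  by (simp add: revid_def scalar_prod_def atLeast0LessThan if_distrib[of "\<lambda>c. c * _"]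
      sum.If_cases Int_def revid_index_set)

lemma index_mult_revid:
  assumes "Q \<in> carrier_mat r k" and "i < r" and "j < k"
  shows "(Q * revid k) $$ (i, j) = Q $$ (i, k - 1 - j)"
  using assms
  by (simp add: revid_def scalar_prod_def atLeast0LessThan if_distrib[of "\<lambda>c. _ * c"]
      sum.If_cases Int_def revid_index_set)

lemma index_revid_conj:
  assumes "Q \<in> carrier_mat k k" and "i < k" and "j < k"
  shows "(revid k * Q * revid k) $$ (i, j) = Q $$ (k - 1 - i, k - 1 - j)"
proof -
  have "(revid k * Q * revid k) $$ (i, j) = (revid k * Q) $$ (i, k - 1 - j)"
    by (rule index_mult_revid) (use assms in auto)
  also have "\<dots> = Q $$ (k - 1 - i, k - 1 - j)"
    by (rule index_revid_mult) (use assms in auto)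
  finally show ?thesis .
qed

lemma revid_mult_append_vec:
  assumes "x \<in> carrier_vec p" and "y \<in> carrier_vec q"
  shows "revid (p + q) *\<^sub>v (x @\<^sub>v y) = (revid q *\<^sub>v y) @\<^sub>v (revid p *\<^sub>v x)"
  by (rule eq_vecI) (use assms in \<open>auto simp del: index_mult_mat_vec(1) simp: index_revid_mult_vec\<close>)

lemma revid_mult_mirror_vec:
  assumes "x \<in> carrier_vec n" and "y \<in> carrier_vec m" and "z \<in> carrier_vec n"
  shows "revid (n + (m + n)) *\<^sub>v (x @\<^sub>v (y @\<^sub>v z))
    = (revid n *\<^sub>v z) @\<^sub>v ((revid m *\<^sub>v y) @\<^sub>v (revid n *\<^sub>v x))"
proof -
  have "revid (n + (m + n)) *\<^sub>v (x @\<^sub>v (y @\<^sub>v z))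
      = ((revid n *\<^sub>v z) @\<^sub>v (revid m *\<^sub>v y)) @\<^sub>v (revid n *\<^sub>v x)"
    using assms by (simp add: revid_mult_append_vec)
  then show ?thesis using assms by (auto intro!: eq_vecI)
qed

lemma revid_mult_zero_vec: "revid k *\<^sub>v 0\<^sub>v k = 0\<^sub>v k"
  by (auto simp del: index_mult_mat_vec(1) simp: index_revid_mult_vec intro!: eq_vecI)

lemma revid_mult_uminus_vec: "x \<in> carrier_vec k \<Longrightarrow> revid k *\<^sub>v (- x) = - (revid k *\<^sub>v x)"
  by (auto simp del: index_mult_mat_vec(1) simp: index_revid_mult_vec intro!: eq_vecI)

lemma revid_conj_block_diag:
  assumes "A \<in> carrier_mat p p" and "B \<in> carrier_mat q q"
  shows "revid (p + q) * block_diag A B * revid (p + q)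
    = block_diag (revid q * B * revid q) (revid p * A * revid p)"
  by (rule eq_matI) (use assms in \<open>auto simp del: index_mult_mat(1) simp: index_revid_conj\<close>)

lemma centrosymmetric_mirror_block_diag:
  assumes A: "A \<in> carrier_mat m m" "centrosymmetric A" and B: "B \<in> carrier_mat n n" "centrosymmetric B"
  shows "centrosymmetric (block_diag B (block_diag A B))"
proof -
  have JAJ: "revid m * A * revid m = A" and JBJ: "revid n * B * revid n = B"
    using A B unfolding centrosymmetric_def by auto
  have AB: "block_diag A B \<in> carrier_mat (m + n) (m + n)" using A B by auto
  have "revid (n + (m + n)) * block_diag B (block_diag A B) * revid (n + (m + n))
      = block_diag (block_diag B A) B"
    unfolding revid_conj_block_diag[OF B(1) AB] revid_conj_block_diag[OF A(1) B(1)] JAJ JBJ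
    using A B by simp
  also have "\<dots> = block_diag B (block_diag A B)"
    by (rule assoc_four_block_mat[symmetric])
  finally show ?thesis using A B unfolding centrosymmetric_def by simp
qed

lemma conj_rank_update:
  fixes J D W K S :: "'a :: comm_ring_1 mat"
  assumes J: "J \<in> carrier_mat n n" "transpose_mat J = J" and D: "D \<in> carrier_mat n n" "J * D * J = D"
    and W: "W \<in> carrier_mat n r" and S: "S \<in> carrier_mat r r" "transpose_mat S = S"
    and JW: "J * W = W * S" and K: "K \<in> carrier_mat r r" "S * K * S = K"
  shows "J * (D + W * K * transpose_mat W) * J = D + W * K * transpose_mat W"
proof -
  have WTJ: "transpose_mat W * J = S * transpose_mat W"
    using transpose_mult[OF J(1) W] transpose_mult[OF W S(1)] J(2) S(2) by (simp add: JW)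
  have "J * (W * K * transpose_mat W) * J = (J * W) * K * (transpose_mat W * J)"
    using J W K by (simp add: assoc_mult_mat_dims)
  also have "\<dots> = W * (S * K * S) * transpose_mat W"
    unfolding JW WTJ using W S K(1) by (simp add: assoc_mult_mat_dims)
  finally have "J * (W * K * transpose_mat W) * J = W * K * transpose_mat W" using K by simp
  then show ?thesis
    using J D W K by (simp add: mult_add_distrib_mat[of J n n] add_mult_distrib_mat[of _ n n _ J n])
qed

section \<open>The construction\<close>

definition coupling_mat :: "real \<Rightarrow> real \<Rightarrow> real mat" where
  "coupling_mat k c = mat_of_rows_list 3 [[0, k, 0], [k, c, 0], [0, 0, - c]]"

lemma coupling_mat_carrier: "coupling_mat k c \<in> carrier_mat 3 3"
  unfolding coupling_mat_def by (simp add: mat_of_rows_list_def numeral_3_eq_3)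

lemma transpose_coupling_mat: "transpose_mat (coupling_mat k c) = coupling_mat k c"
  unfolding coupling_mat_def mat_of_rows_list_def by (auto simp: less_Suc_eq numeral_3_eq_3 intro!: eq_matI)

lemma coupling_mat_sign_invariant:
  "mat_diag 3 (\<lambda>j. [1, 1, -1] ! j) * coupling_mat k c * mat_diag 3 (\<lambda>j. [1, 1, -1] ! j)
    = coupling_mat k c"
proof -
  have K: "coupling_mat k c \<in> carrier_mat 3 3" by (rule coupling_mat_carrier)
  then show ?thesis
    by (simp add: mat_diag_mult_left[OF K] mat_diag_mult_right[of _ 3])
      (auto simp: coupling_mat_def mat_of_rows_list_def less_Suc_eq numeral_3_eq_3 intro!: eq_matI)
qed

locale normal_centrosymmetric_pair =
  fixes A B :: "real mat" and m n :: nat and \<alpha> \<beta> :: real and u v :: "real vec"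
  assumes A: "A \<in> carrier_mat m m" "normal_mat A" "centrosymmetric A" "nonneg_mat A"
    and u: "u \<in> carrier_vec m" "is_unit_vector u" "nonneg_vec u"
      "A *\<^sub>v u = \<alpha> \<cdot>\<^sub>v u" "revid m *\<^sub>v u = u"
    and B: "B \<in> carrier_mat n n" "normal_mat B" "centrosymmetric B" "nonneg_mat B"
    and v: "v \<in> carrier_vec n" "is_unit_vector v" "nonneg_vec v"
      "B *\<^sub>v v = \<beta> \<cdot>\<^sub>v v" "revid n *\<^sub>v v = v"
begin

abbreviation N where "N \<equiv> n + (m + n)"

definition D where "D = block_diag B (block_diag A B)"

definition w0 where "w0 = 0\<^sub>v n @\<^sub>v (u @\<^sub>v 0\<^sub>v n)"

definition w1 where "w1 = v @\<^sub>v (0\<^sub>v m @\<^sub>v v)"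

definition w2 where "w2 = v @\<^sub>v (0\<^sub>v m @\<^sub>v - v)"

definition W where "W = mat_of_cols N [w0, w1, w2]"

lemma D_carrier: "D \<in> carrier_mat N N"
  unfolding D_def using A B by auto

lemma W_carrier: "W \<in> carrier_mat N 3"
  unfolding W_def using mat_of_cols_carrier[of N "[w0, w1, w2]"] by (simp add: numeral_3_eq_3)

lemma w_carrier: "w0 \<in> carrier_vec N" "w1 \<in> carrier_vec N" "w2 \<in> carrier_vec N"
  unfolding w0_def w1_def w2_def using u v by auto

lemma normal_D: "normal_mat D"
  unfolding D_def using A B by (intro normal_mat_block_diag block_diag_carrier) auto

lemma centrosymmetric_D: "centrosymmetric D"
  unfolding D_def using A(1,3) B(1,3) by (rule centrosymmetric_mirror_block_diag)

lemma nonneg_D: "nonneg_mat D"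
  unfolding D_def using A(4) B(4) by (intro nonneg_mat_block_diag)

lemma char_poly_D: "char_poly D = char_poly A * char_poly B * char_poly B"
  unfolding D_def char_poly_block_diag[OF B(1) block_diag_carrier[OF A(1) B(1)]]
    char_poly_block_diag[OF A(1) B(1)] by (simp add: ac_simps)

lemma mirror_block_diag_mult_W:
  assumes M1: "M1 \<in> carrier_mat m m" "M1 *\<^sub>v u = \<alpha> \<cdot>\<^sub>v u"
    and M2: "M2 \<in> carrier_mat n n" "M2 *\<^sub>v v = \<beta> \<cdot>\<^sub>v v"
  shows "block_diag M2 (block_diag M1 M2) * W = W * mat_diag 3 (\<lambda>j. [\<alpha>, \<beta>, \<beta>] ! j)"
proof -
  have zero: "M *\<^sub>v 0\<^sub>v k = e \<cdot>\<^sub>v 0\<^sub>v k" if "M \<in> carrier_mat k k" for M :: "real mat" and k e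
    using that by (auto intro!: eq_vecI)
  have "row M2 i \<bullet> v = \<beta> * v $ i" if "i < n" for i
    using arg_cong[OF M2(2), of "\<lambda>x. x $ i"] that M2(1) v(1) by simp
  then have neg: "M2 *\<^sub>v - v = \<beta> \<cdot>\<^sub>v - v"
    using M2(1) v(1) by (auto intro!: eq_vecI simp: scalar_prod_uminus_right)
  have M12: "block_diag M1 M2 \<in> carrier_mat (m + n) (m + n)" using M1 M2 by auto
  have "block_diag M2 (block_diag M1 M2) *\<^sub>v w0 = \<alpha> \<cdot>\<^sub>v w0"
    unfolding w0_def using M1 M2 u v zero M12
    by (intro block_diag_eigenvector) auto
  moreover have "block_diag M2 (block_diag M1 M2) *\<^sub>v w1 = \<beta> \<cdot>\<^sub>v w1"
    unfolding w1_def using M1 M2 u v zero M12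
    by (intro block_diag_eigenvector) auto
  moreover have "block_diag M2 (block_diag M1 M2) *\<^sub>v w2 = \<beta> \<cdot>\<^sub>v w2"
    unfolding w2_def using M1 M2 u v zero M12 neg
    by (intro block_diag_eigenvector) auto
  ultimately have "block_diag M2 (block_diag M1 M2) * W
      = W * mat_diag (length [w0, w1, w2]) (\<lambda>j. [\<alpha>, \<beta>, \<beta>] ! j)"
    unfolding W_def using w_carrier M1 M2
    by (intro mult_mat_of_cols_eigenvectors) (auto simp: less_Suc_eq)
  then show ?thesis by (simp add: numeral_3_eq_3)
qed

lemma D_mult_W: "D * W = W * mat_diag 3 (\<lambda>j. [\<alpha>, \<beta>, \<beta>] ! j)"
  unfolding D_def using A(1) u(4) B(1) v(4) by (rule mirror_block_diag_mult_W)

lemma transpose_D_mult_W: "transpose_mat D * W = W * mat_diag 3 (\<lambda>j. [\<alpha>, \<beta>, \<beta>] ! j)"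
proof -
  have "transpose_mat D = block_diag (transpose_mat B) (block_diag (transpose_mat A) (transpose_mat B))"
    unfolding D_def transpose_block_diag[OF B(1) block_diag_carrier[OF A(1) B(1)]]
      transpose_block_diag[OF A(1) B(1)] using A(1) B(1) by simp
  then show ?thesis
    using A B u v by (simp only:) (intro mirror_block_diag_mult_W normal_mat_eigenvector_transpose; auto)
qed

lemma revid_mult_W: "revid N * W = W * mat_diag 3 (\<lambda>j. [1, 1, -1] ! j)"
proof -
  have "revid N *\<^sub>v w0 = 1 \<cdot>\<^sub>v w0" "revid N *\<^sub>v w1 = 1 \<cdot>\<^sub>v w1" "revid N *\<^sub>v w2 = -1 \<cdot>\<^sub>v w2"
    unfolding w0_def w1_def w2_def using u v
    by (auto simp: revid_mult_mirror_vec revid_mult_zero_vec revid_mult_uminus_vec)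
  then have "revid N * W = W * mat_diag (length [w0, w1, w2]) (\<lambda>j. [1, 1, -1] ! j)"
    unfolding W_def using w_carrier
    by (intro mult_mat_of_cols_eigenvectors) (auto simp: less_Suc_eq)
  then show ?thesis by (simp add: numeral_3_eq_3)
qed

lemma gram_W: "transpose_mat W * W = mat_diag 3 (\<lambda>j. [1, 2, 2] ! j)"
proof -
  have "u \<bullet> u = 1" "v \<bullet> v = 1" using u(2) v(2) unfolding is_unit_vector_def by auto
  then have "w0 \<bullet> w0 = 1" "w1 \<bullet> w1 = 2" "w2 \<bullet> w2 = 2"
    "w0 \<bullet> w1 = 0" "w0 \<bullet> w2 = 0" "w1 \<bullet> w2 = 0"
    unfolding w0_def w1_def w2_def using u(1) v(1)
    by (simp_all add: scalar_prod_append[of _ n _ "m + n"] scalar_prod_append[of _ m _ n] scalar_prod_uminus_right)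
  moreover have "w1 \<bullet> w0 = w0 \<bullet> w1" "w2 \<bullet> w0 = w0 \<bullet> w2" "w2 \<bullet> w1 = w1 \<bullet> w2"
    using w_carrier by (simp_all add: comm_scalar_prod[of _ N])
  ultimately show ?thesis
    unfolding W_def using w_carrier
    by (auto simp: mat_diag_def less_Suc_eq numeral_3_eq_3 intro!: eq_matI)
qed

lemma w_nonneg: "i < N \<Longrightarrow> w0 $ i \<ge> 0" "i < N \<Longrightarrow> w1 $ i \<ge> 0"
  using u(1,3) v(1,3) unfolding w0_def w1_def nonneg_vec_def by auto

lemma abs_w2: "i < N \<Longrightarrow> \<bar>w2 $ i\<bar> = w1 $ i"
  using v(1,3) unfolding w1_def w2_def nonneg_vec_def by auto

lemma index_rank_update_coupling:
  assumes "i < N" and "j < N"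
  shows "(W * coupling_mat k c * transpose_mat W) $$ (i, j)
    = k * (w0 $ i * w1 $ j + w1 $ i * w0 $ j) + c * (w1 $ i * w1 $ j - w2 $ i * w2 $ j)"
  using assms w_carrier
  by (simp add: W_def coupling_mat_def mat_of_rows_list_def mat_of_cols_def scalar_prod_def
      eval_nat_numeral sum.atLeast0_lessThan_Suc algebra_simps)

definition perturbed where "perturbed k c = D + W * coupling_mat k c * transpose_mat W"

lemma perturbed_carrier: "perturbed k c \<in> carrier_mat N N"
  unfolding perturbed_def using D_carrier W_carrier coupling_mat_carrier by auto

lemma normal_perturbed: "normal_mat (perturbed k c)"
  unfolding perturbed_def
  using D_carrier normal_D W_carrier coupling_mat_carrier transpose_coupling_mat
  by (rule normal_mat_rank_update) (simp add: D_mult_W transpose_D_mult_W)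

lemma centrosymmetric_perturbed: "centrosymmetric (perturbed k c)"
proof -
  have "revid N * D * revid N = D" using centrosymmetric_D D_carrier unfolding centrosymmetric_def by simp
  then have "revid N * perturbed k c * revid N = perturbed k c"
    unfolding perturbed_def
    by (intro conj_rank_update[OF revid_carrier transpose_revid D_carrier _ W_carrier mat_diag_dim
          transpose_mat_diag revid_mult_W coupling_mat_carrier coupling_mat_sign_invariant])
  then show ?thesis using carrier_matD[OF perturbed_carrier] unfolding centrosymmetric_def by simp
qed

lemma nonneg_perturbed:
  assumes "k \<ge> 0" and "c \<ge> 0"
  shows "nonneg_mat (perturbed k c)"
  unfolding nonneg_mat_def
proof (intro allI impI)
  fix i j assume "i < dim_row (perturbed k c)" and "j < dim_col (perturbed k c)"
  then have ij: "i < N" "j < N" using carrier_matD[OF perturbed_carrier] by auto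
  have "w2 $ i * w2 $ j \<le> w1 $ i * w1 $ j"
    using abs_w2[OF ij(1)] abs_w2[OF ij(2)] by (metis abs_ge_self abs_mult)
  then have "0 \<le> k * (w0 $ i * w1 $ j + w1 $ i * w0 $ j) + c * (w1 $ i * w1 $ j - w2 $ i * w2 $ j)"
    using assms w_nonneg[OF ij(1)] w_nonneg[OF ij(2)] by simp
  moreover have "0 \<le> D $$ (i, j)" using nonneg_D D_carrier ij unfolding nonneg_mat_def by simp
  moreover have "perturbed k c $$ (i, j) = D $$ (i, j) + (W * coupling_mat k c * transpose_mat W) $$ (i, j)"
    unfolding perturbed_def using ij D_carrier W_carrier coupling_mat_carrier
    by (simp del: index_mult_mat(1))
  ultimately show "0 \<le> perturbed k c $$ (i, j)"
    by (simp add: index_rank_update_coupling[OF ij])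
qed

lemma char_poly_perturbed:
  "char_poly (perturbed k c) * char_poly (mat_diag 3 (\<lambda>j. [\<alpha>, \<beta>, \<beta>] ! j))
    = char_poly D
      * char_poly (mat_of_rows_list 3 [[\<alpha>, 2 * k, 0], [k, \<beta> + 2 * c, 0], [0, 0, \<beta> - 2 * c]])"
proof -
  have "mat_diag 3 (\<lambda>j. [\<alpha>, \<beta>, \<beta>] ! j) + coupling_mat k c * transpose_mat W * W
      = mat_of_rows_list 3 [[\<alpha>, 2 * k, 0], [k, \<beta> + 2 * c, 0], [0, 0, \<beta> - 2 * c]]"
    using carrier_matD[OF W_carrier] carrier_matD[OF coupling_mat_carrier]
    by (simp add: assoc_mult_mat_dims gram_W mat_diag_mult_right[OF coupling_mat_carrier])
      (auto simp: coupling_mat_def mat_of_rows_list_def mat_diag_def less_Suc_eq numeral_3_eq_3 intro!: eq_matI)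
  then show ?thesis
    unfolding perturbed_def
    using char_poly_rank_update[OF D_carrier mat_diag_dim W_carrier coupling_mat_carrier _ D_mult_W]
      W_carrier by simp
qed

lemma char_poly_perturbed_factored:
  assumes "x + y = \<alpha> + (\<beta> + 2 * c)" and "x * y = \<alpha> * (\<beta> + 2 * c) - 2 * k * k"
  shows "char_poly (perturbed k c) * ([:- \<alpha>, 1:] * [:- \<beta>, 1:] * [:- \<beta>, 1:])
    = char_poly A * char_poly B * char_poly B * ([:- x, 1:] * [:- y, 1:] * [:- (\<beta> - 2 * c), 1:])"
  using char_poly_perturbed[of k c] char_poly_block_2_1[OF assms]
  by (simp only: char_poly_mat_diag_3 char_poly_D)

end

theorem corollary3p6:
  fixes A B :: "real mat" and m n :: nat
    and \<alpha>1 \<beta>1 a b :: real and \<alpha>s \<beta>s :: "complex list"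
    and u1 v1 :: "real vec"
  assumes A: "A \<in> carrier_mat m m" "normal_mat A" "centrosymmetric A" "nonneg_mat A"
      and A_eig: "eigenvalues_list A (complex_of_real \<alpha>1 # \<alpha>s)"
      and A_perron: "\<alpha>1 = perron_root A"
      and u1: "u1 \<in> carrier_vec m" "is_unit_vector u1" "nonneg_vec u1"
              "A *\<^sub>v u1 = \<alpha>1 \<cdot>\<^sub>v u1" "revid m *\<^sub>v u1 = u1"
      and B: "B \<in> carrier_mat n n" "normal_mat B" "centrosymmetric B" "nonneg_mat B"
      and B_eig: "eigenvalues_list B (complex_of_real \<beta>1 # \<beta>s)"
      and B_perron: "\<beta>1 = perron_root B"
      and v1: "v1 \<in> carrier_vec n" "is_unit_vector v1" "nonneg_vec v1"
              "B *\<^sub>v v1 = \<beta>1 \<cdot>\<^sub>v v1" "revid n *\<^sub>v v1 = v1"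
      and ge: "\<alpha>1 \<ge> \<beta>1"
      and ab: "\<alpha>1 - \<beta>1 \<ge> a" "a \<ge> b" "a + b \<le> 0"
  shows "\<exists>C. C \<in> carrier_mat (m + 2 * n) (m + 2 * n) \<and> normal_mat C \<and>
             centrosymmetric C \<and> nonneg_mat C \<and>
             eigenvalues_list C
               ([complex_of_real (\<alpha>1 - (a + b)), complex_of_real (\<beta>1 + a),
                 complex_of_real (\<beta>1 + b)] @ \<alpha>s @ \<beta>s @ \<beta>s)"
proof -
  interpret normal_centrosymmetric_pair A B m n \<alpha>1 \<beta>1 u1 v1
    using A u1 B v1 by unfold_locales
  define c where "c = - b / 2"
  define k where "k = sqrt (- (a + b) * (\<alpha>1 - \<beta>1 - a) / 2)"
  have "- (a + b) * (\<alpha>1 - \<beta>1 - a) \<ge> 0" using ab by (intro mult_nonneg_nonneg) auto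
  then have k: "k \<ge> 0" "2 * k * k = - (a + b) * (\<alpha>1 - \<beta>1 - a)"
    unfolding k_def by (auto simp: mult.assoc)
  have c: "c \<ge> 0" "\<beta>1 - 2 * c = \<beta>1 + b" unfolding c_def using ab by auto
  have "char_poly (perturbed k c) * ([:- \<alpha>1, 1:] * [:- \<beta>1, 1:] * [:- \<beta>1, 1:])
      = char_poly A * char_poly B * char_poly B
        * ([:- (\<alpha>1 - (a + b)), 1:] * [:- (\<beta>1 + a), 1:] * [:- (\<beta>1 + b), 1:])"
    unfolding c(2)[symmetric] using k(2)
    by (intro char_poly_perturbed_factored) (auto simp: c_def algebra_simps)
  then have "eigenvalues_list (perturbed k c)
      ([complex_of_real (\<alpha>1 - (a + b)), complex_of_real (\<beta>1 + a), complex_of_real (\<beta>1 + b)]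
        @ \<alpha>s @ \<beta>s @ \<beta>s)"
    by (rule eigenvalues_list_cancel[OF perturbed_carrier A(1) B(1) A_eig B_eig])
  moreover have "perturbed k c \<in> carrier_mat (m + 2 * n) (m + 2 * n)"
    using perturbed_carrier[of k c] unfolding mult_2 by (simp add: ac_simps)
  ultimately show ?thesis
    using normal_perturbed centrosymmetric_perturbed nonneg_perturbed[OF k(1) c(1)] by blast
qed

end
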